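(* Let $K$ be a field of characteristic $0$, let $E$ be a subfield of $K$, let $f,g\in K[X]$ have degree greater than one, and let $x_0,y_0\in K$. Assume that $(f,x_0)$ and $(g,y_0)$ are both isotrivial over $E$, and that $\mathcal{O}_f(x_0)\cap\mathcal{O}_g(y_0)$ is infinite. Then there exists a single linear $\mu\in\overline{K}[X]$ such that $\mu\circ f\circ\mu^{\circ(-1)}\in\overline{E}[X]$, $\mu\circ g\circ\mu^{\circ(-1)}\in\overline{E}[X]$, $\mu(x_0)\in\overline{E}$ and $\mu(y_0)\in\overline{E}$.
   Context: $\overline K$ is an algebraic closure of $K$ and $\overline E$ is the algebraic closure of $E$ inside $\overline K$. A linear polynomial has degree exactly $1$ and $\mu^{\circ(-1)}$ is its compositional inverse. For $\phi\in K[X]$ and $z\in K$, the pair $(\phi,z)$ is isotrivial over $E$ if there exists a linear $\ell\in\overline K[X]$ with $\ell\circ\phi\circ\ell^{\circ(-1)}\in\overline E[X]$ and $\ell(z)\in\overline E$. $\mathcal{O}_f(x_0)=\{f^{\circ n}(x_0):n\ge0\}$, where $f^{\circ n}$ is the $n$-th iterate. *)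

theory Defs
  imports "HOL-Computational_Algebra.Polynomial"
begin

definition is_subfield :: "'a::field set \<Rightarrow> bool" where
  "is_subfield S \<longleftrightarrow> 0 \<in> S \<and> 1 \<in> S \<and>
     (\<forall>x\<in>S. \<forall>y\<in>S. x + y \<in> S \<and> x * y \<in> S) \<and>
     (\<forall>x\<in>S. - x \<in> S \<and> inverse x \<in> S)"

definition poly_over :: "'a::field set \<Rightarrow> 'a poly \<Rightarrow> bool" where
  "poly_over S p \<longleftrightarrow> (\<forall>i. coeff p i \<in> S)"

definition algebraic_over :: "'a::field set \<Rightarrow> 'a \<Rightarrow> bool" where
  "algebraic_over S x \<longleftrightarrow> (\<exists>p. p \<noteq> 0 \<and> poly_over S p \<and> poly p x = 0)"

definition alg_closure_in :: "'a::field set \<Rightarrow> 'a set" where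
  "alg_closure_in S = {x. algebraic_over S x}"

text \<open>Compositional inverse of a linear polynomial a + b X (b \<noteq> 0).\<close>
definition lin_inv :: "'a::field poly \<Rightarrow> 'a poly" where
  "lin_inv l = [: - coeff l 0 / coeff l 1, 1 / coeff l 1 :]"

definition conj_lin :: "'a::field poly \<Rightarrow> 'a poly \<Rightarrow> 'a poly" where
  "conj_lin l phi = pcompose l (pcompose phi (lin_inv l))"

text \<open>(phi, z) is isotrivial over E (ambient type is the algebraic closure).\<close>
definition isotrivial :: "'a::field set \<Rightarrow> 'a poly \<Rightarrow> 'a \<Rightarrow> bool" where
  "isotrivial E phi z \<longleftrightarrow> (\<exists>l. degree l = 1 \<and>
      poly_over (alg_closure_in E) (conj_lin l phi) \<and> poly l z \<in> alg_closure_in E)"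

definition orbit :: "'a::comm_semiring_0 poly \<Rightarrow> 'a \<Rightarrow> 'a set" where
  "orbit f x0 = {(poly f ^^ n) x0 | n. True}"

end

theory Submission
  imports Defs "HOL-Algebra.Algebraic_Closure_Type"
begin

(* Let A be the algebraic closure of E inside the ambient field.
   Isotriviality gives linear l, m with l f l^-1, m g m^-1 over A and
   l(x0), m(y0) in A.  Conjugation intertwines the dynamics, l(f(w)) =
   (l f l^-1)(l(w)), so l maps the whole orbit of x0 into A, and m maps the
   orbit of y0 into A.  Two distinct common orbit points z1, z2 (available
   since the intersection is infinite) are then sent into A by both l and m;
   as both are affine, m = sigma o l with sigma(t) = s + r t and r, s in A.
   Hence l g l^-1 = sigma^-1 (m g m^-1) sigma is over A and
   l(y0) = sigma^-1(m(y0)) is in A, so mu = l works for both pairs.  The argument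
   needs only two common orbit points. *)

text \<open>HOL-Algebra reuses the names \<open>degree\<close>, \<open>smult\<close> and \<open>coeff\<close>; keep the
  type-class polynomial notions unqualified.\<close>
hide_const (open) Polynomials.degree Module.smult UnivPoly.coeff

section \<open>Subfields and polynomials over them\<close>

lemma is_subfieldD:
  assumes "is_subfield A"
  shows "0 \<in> A" "1 \<in> A" "x \<in> A \<Longrightarrow> y \<in> A \<Longrightarrow> x + y \<in> A" "x \<in> A \<Longrightarrow> y \<in> A \<Longrightarrow> x * y \<in> A"
    "x \<in> A \<Longrightarrow> - x \<in> A" "x \<in> A \<Longrightarrow> inverse x \<in> A"
  using assms unfolding is_subfield_def by auto

lemma is_subfield_diff: "is_subfield A \<Longrightarrow> x \<in> A \<Longrightarrow> y \<in> A \<Longrightarrow> x - y \<in> A"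
  using is_subfieldD[of A] by (metis diff_conv_add_uminus)

lemma is_subfield_divide: "is_subfield A \<Longrightarrow> x \<in> A \<Longrightarrow> y \<in> A \<Longrightarrow> x / y \<in> A"
  using is_subfieldD[of A] by (metis divide_inverse)

lemma poly_over_pCons [simp]: "poly_over A (pCons a p) \<longleftrightarrow> a \<in> A \<and> poly_over A p"
  unfolding poly_over_def by (metis coeff_pCons_0 coeff_pCons_Suc not0_implies_Suc)

lemma poly_over_0: "is_subfield A \<Longrightarrow> poly_over A 0"
  unfolding poly_over_def using is_subfieldD by auto

lemma poly_over_add: "is_subfield A \<Longrightarrow> poly_over A p \<Longrightarrow> poly_over A q \<Longrightarrow> poly_over A (p + q)"
  unfolding poly_over_def by (auto intro: is_subfieldD)

lemma poly_over_smult: "is_subfield A \<Longrightarrow> a \<in> A \<Longrightarrow> poly_over A q \<Longrightarrow> poly_over A (smult a q)"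
  unfolding poly_over_def by (auto intro: is_subfieldD)

lemma poly_over_mult: "is_subfield A \<Longrightarrow> poly_over A p \<Longrightarrow> poly_over A q \<Longrightarrow> poly_over A (p * q)"
  by (induction p) (auto intro!: poly_over_add poly_over_smult is_subfieldD)

lemma poly_over_pcompose:
  "is_subfield A \<Longrightarrow> poly_over A p \<Longrightarrow> poly_over A q \<Longrightarrow> poly_over A (pcompose p q)"
  by (induction p) (auto simp: pcompose_pCons intro!: poly_over_add poly_over_mult poly_over_0 is_subfieldD)

lemma poly_over_poly_in:
  "is_subfield A \<Longrightarrow> poly_over A p \<Longrightarrow> x \<in> A \<Longrightarrow> poly p x \<in> A"
  by (induction p) (auto intro!: is_subfieldD)

section \<open>The algebraic closure of a subfield is a subfield\<close>

text \<open>A type-class field viewed as a HOL-Algebra ring, so that the library result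
  that algebraic elements form a subfield becomes available.\<close>
definition type_ring :: "'a::field ring" where
  "type_ring = ring_of_type_algebra"

lemma type_ring_field: "field (type_ring :: 'a::field ring)"
  unfolding type_ring_def by (rule field_from_type_algebra)

lemma type_ring_simps [simp]:
  "carrier type_ring = UNIV" "x \<oplus>\<^bsub>type_ring\<^esub> y = x + y" "x \<otimes>\<^bsub>type_ring\<^esub> y = x * y"
  "\<zero>\<^bsub>type_ring\<^esub> = 0" "\<one>\<^bsub>type_ring\<^esub> = 1"
  by (simp_all add: type_ring_def ring_of_type_algebra_def)

lemma type_ring_pow [simp]: "x [^]\<^bsub>type_ring\<^esub> (n::nat) = x ^ n"
  by (induction n) (auto simp: type_ring_def ring_of_type_algebra_def)

lemma type_ring_neg [simp]: "\<ominus>\<^bsub>type_ring\<^esub> (x::'a::field) = - x"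
proof -
  interpret field type_ring by (rule type_ring_field)
  have "\<ominus>\<^bsub>type_ring\<^esub> x + x = 0" using l_neg[of x] by simp
  thus ?thesis by (simp add: eq_neg_iff_add_eq_0)
qed

lemma type_ring_inv: "(x::'a::field) \<noteq> 0 \<Longrightarrow> inv\<^bsub>type_ring\<^esub> x = inverse x"
proof -
  interpret field type_ring by (rule type_ring_field)
  assume "x \<noteq> 0"
  hence "x \<in> Units type_ring" using field_Units by auto
  hence "inv\<^bsub>type_ring\<^esub> x * x = 1" using Units_l_inv[of x] by simp
  thus ?thesis using \<open>x \<noteq> 0\<close> by (metis inverse_unique mult.commute)
qed

text \<open>HOL-Algebra polynomials are coefficient lists, highest degree first.\<close>
lemma type_ring_eval: "ring.eval type_ring p x = poly (Poly (rev p)) (x::'a::field)"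
proof -
  interpret field type_ring by (rule type_ring_field)
  show ?thesis by (induction p) (auto simp: Poly_append poly_monom algebra_simps)
qed

lemma type_ring_subfield:
  assumes "is_subfield (E::'a::field set)" shows "subfield E type_ring"
proof -
  interpret field type_ring by (rule type_ring_field)
  show ?thesis
  proof (rule subfieldI'[OF subringI])
    fix x y assume "x \<in> E" "y \<in> E"
    thus "\<ominus>\<^bsub>type_ring\<^esub> x \<in> E" "x \<otimes>\<^bsub>type_ring\<^esub> y \<in> E" "x \<oplus>\<^bsub>type_ring\<^esub> y \<in> E"
      using assms unfolding is_subfield_def by auto
  next
    fix x assume "x \<in> E - {\<zero>\<^bsub>type_ring\<^esub>}"
    thus "inv\<^bsub>type_ring\<^esub> x \<in> E" using assms unfolding is_subfield_def by (auto simp: type_ring_inv)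
  qed (use assms in \<open>auto simp: is_subfield_def\<close>)
qed

lemma algebraic_over_imp_algebraic:
  assumes E: "is_subfield (E::'a::field set)" and "algebraic_over E x"
  shows "ring.algebraic type_ring E x"
proof -
  interpret field type_ring by (rule type_ring_field)
  obtain p where p: "p \<noteq> 0" "poly_over E p" "poly p x = 0"
    using assms(2) unfolding algebraic_over_def by blast
  let ?q = "rev (coeffs p)"
  have q: "?q \<in> carrier (E[X]\<^bsub>type_ring\<^esub>)"
    using p unfolding univ_poly_carrier[symmetric] polynomial_def poly_over_def
    by (auto simp: coeffs_def hd_rev last_map)
  have zero: "[] \<in> carrier (E[X]\<^bsub>type_ring\<^esub>)"
    unfolding univ_poly_carrier[symmetric] polynomial_def by auto
  have "eval ?q x = eval [] x" "?q \<noteq> []" using p by (simp_all add: type_ring_eval)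
  thus ?thesis using q zero unfolding transcendental_def inj_on_def by blast
qed

lemma algebraic_imp_algebraic_over:
  assumes E: "is_subfield (E::'a::field set)" and "ring.algebraic type_ring E x"
  shows "algebraic_over E x"
proof -
  interpret field type_ring by (rule type_ring_field)
  obtain p where p: "p \<in> carrier (E[X]\<^bsub>type_ring\<^esub>)" "p \<noteq> []" "eval p x = 0"
    using algebraicE[OF subfieldE(1)[OF type_ring_subfield[OF E]], of x] assms(2) by (auto simp: over_def)
  have lead: "hd p \<noteq> 0" and coeffs: "set p \<subseteq> E"
    using p unfolding univ_poly_carrier[symmetric] polynomial_def by auto
  have "Poly (rev p) \<noteq> 0"
  proof
    assume "Poly (rev p) = 0"
    then obtain n where "rev p = replicate n 0" by (auto simp: Poly_eq_0)
    thus False using lead p(2) by (metis last_replicate last_rev rev_is_Nil_conv replicate_empty)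
  qed
  moreover have "poly_over E (Poly (rev p))"
    using coeffs is_subfieldD(1)[OF E] unfolding poly_over_def
    by (auto simp: nth_default_def) (metis length_rev nth_mem set_rev subsetD)
  moreover have "poly (Poly (rev p)) x = 0" using p(3) type_ring_eval[of p x] by simp
  ultimately show ?thesis unfolding algebraic_over_def by blast
qed

theorem alg_closure_in_is_subfield:
  assumes E: "is_subfield (E::'a::field set)" shows "is_subfield (alg_closure_in E)"
proof -
  interpret field type_ring by (rule type_ring_field)
  have "{x \<in> carrier type_ring. (algebraic over E) x} = alg_closure_in E"
    using algebraic_over_imp_algebraic[OF E] algebraic_imp_algebraic_over[OF E]
    by (auto simp: over_def alg_closure_in_def)
  hence S: "subfield (alg_closure_in E) type_ring"
    using subfield_of_algebraics[OF type_ring_subfield[OF E]] by simp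
  note R = subfieldE(1)[OF S]
  have "inverse x \<in> alg_closure_in E" if x: "x \<in> alg_closure_in E" for x
  proof (cases "x = 0")
    case True thus ?thesis using subringE(2)[OF R] by simp
  next
    case False thus ?thesis using subfield_m_inv(1)[OF S, of x] x type_ring_inv[OF False] by simp
  qed
  thus ?thesis using subringE(2,3,5,6,7)[OF R] unfolding is_subfield_def by simp
qed

section \<open>Linear polynomials and conjugation\<close>

lemma linear_poly_coeffs:
  assumes "degree (l::'a::field poly) = 1"
  shows "l = [:coeff l 0, coeff l 1:]" "coeff l 1 \<noteq> 0"
proof -
  show "coeff l 1 \<noteq> 0" using assms leading_coeff_0_iff[of l] by auto
  show "l = [:coeff l 0, coeff l 1:]"
  proof (rule poly_eqI)
    fix n show "coeff l n = coeff [:coeff l 0, coeff l 1:] n"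
      using assms by (cases n; cases "n - 1") (auto simp: coeff_eq_0)
  qed
qed

lemma poly_linear: "degree (l::'a::field poly) = 1 \<Longrightarrow> poly l z = coeff l 0 + coeff l 1 * z"
  by (subst linear_poly_coeffs(1)) simp_all

lemma poly_lin_inv: "poly (lin_inv l) z = (z - coeff l 0) / coeff l 1"
  unfolding lin_inv_def by (simp add: diff_divide_distrib)

lemma poly_conj_lin: "poly (conj_lin l phi) z = poly l (poly phi (poly (lin_inv l) z))"
  unfolding conj_lin_def by (simp add: poly_pcompose)

lemma conj_lin_intertwines:
  assumes "degree (l::'a::field poly) = 1"
  shows "poly l (poly f w) = poly (conj_lin l f) (poly l w)"
proof -
  have "poly (lin_inv l) (poly l w) = w"
    using linear_poly_coeffs(2)[OF assms] by (simp add: poly_linear[OF assms] poly_lin_inv)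
  thus ?thesis by (simp add: poly_conj_lin)
qed

text \<open>Characteristic 0 lets us identify polynomials with their polynomial functions.\<close>
lemma conj_lin_change:
  fixes l m g :: "'a::field_char_0 poly"
  assumes l: "degree l = 1" and m: "degree m = 1" and "r \<noteq> 0"
    and rel: "\<And>z. poly m z = s + r * poly l z"
  shows "conj_lin l g = pcompose [:- s / r, 1 / r:] (pcompose (conj_lin m g) [:s, r:])"
proof (rule poly_ext)
  fix z
  have "poly (lin_inv m) (s + r * z) = poly (lin_inv l) z"
    using rel[of 0] rel[of 1] \<open>r \<noteq> 0\<close> linear_poly_coeffs(2)[OF l] linear_poly_coeffs(2)[OF m]
    unfolding poly_lin_inv poly_linear[OF l] poly_linear[OF m] by (simp add: field_simps)
  hence "poly (pcompose [:- s / r, 1 / r:] (pcompose (conj_lin m g) [:s, r:])) z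
      = - s / r + poly m (poly g (poly (lin_inv l) z)) / r"
    by (simp add: poly_pcompose poly_conj_lin mult.commute[of z r])
  also have "\<dots> = poly (conj_lin l g) z"
    unfolding rel poly_conj_lin using \<open>r \<noteq> 0\<close> by (simp add: field_simps)
  finally show "poly (conj_lin l g) z = poly (pcompose [:- s / r, 1 / r:] (pcompose (conj_lin m g) [:s, r:])) z" ..
qed

section \<open>Orbits and rigidity of linear maps\<close>

lemma orbit_image_in:
  assumes A: "is_subfield A" and l: "degree l = 1"
    and F: "poly_over A (conj_lin l f)" and x0: "poly l x0 \<in> A"
    and z: "z \<in> orbit f x0"
  shows "poly l z \<in> A"
proof -
  have "poly l ((poly f ^^ n) x0) \<in> A" for n
    by (induction n) (auto simp: x0 conj_lin_intertwines[OF l] intro!: poly_over_poly_in[OF A F])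
  thus ?thesis using z unfolding orbit_def by auto
qed

lemma linear_maps_related_over:
  fixes l m :: "'a::field poly"
  assumes A: "is_subfield A" and l: "degree l = 1" and m: "degree m = 1"
    and "z1 \<noteq> z2" and in_A: "poly l z1 \<in> A" "poly l z2 \<in> A" "poly m z1 \<in> A" "poly m z2 \<in> A"
  obtains r s where "r \<in> A" "s \<in> A" "r \<noteq> 0" "\<And>z. poly m z = s + r * poly l z"
proof -
  define r where "r = coeff m 1 / coeff l 1"
  define s where "s = coeff m 0 - r * coeff l 0"
  note b = linear_poly_coeffs(2)[OF l] and d = linear_poly_coeffs(2)[OF m]
  have rel: "poly m z = s + r * poly l z" for z
    unfolding s_def r_def poly_linear[OF l] poly_linear[OF m] using b by (simp add: field_simps)
  have "r = (poly m z1 - poly m z2) / (poly l z1 - poly l z2)"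
    using \<open>z1 \<noteq> z2\<close> b d unfolding rel poly_linear[OF l] by (simp add: field_simps)
  hence "r \<in> A" using in_A A by (simp add: is_subfield_divide is_subfield_diff)
  moreover have "s \<in> A"
    using rel[of z1] in_A \<open>r \<in> A\<close> A is_subfield_diff[OF A] is_subfieldD(4)[OF A]
    by (metis add_diff_cancel_right')
  moreover have "r \<noteq> 0" using b d by (simp add: r_def)
  ultimately show ?thesis using that rel by blast
qed

lemma common_conjugator:
  fixes f g :: "'a::field_char_0 poly"
  assumes A: "is_subfield A"
    and l: "degree l = 1" "poly_over A (conj_lin l f)" "poly l x0 \<in> A"
    and m: "degree m = 1" "poly_over A (conj_lin m g)" "poly m y0 \<in> A"
    and z: "z1 \<in> orbit f x0 \<inter> orbit g y0" "z2 \<in> orbit f x0 \<inter> orbit g y0" "z1 \<noteq> z2"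
  shows "poly_over A (conj_lin l g) \<and> poly l y0 \<in> A"
proof -
  obtain r s where rs: "r \<in> A" "s \<in> A" "r \<noteq> 0" and rel: "\<And>z. poly m z = s + r * poly l z"
    using linear_maps_related_over[OF A l(1) m(1) z(3)]
      orbit_image_in[OF A l] orbit_image_in[OF A m] z by blast
  have "poly_over A (conj_lin l g)"
    unfolding conj_lin_change[OF l(1) m(1) rs(3) rel]
    using A m(2) rs by (auto intro!: poly_over_pcompose poly_over_0 is_subfield_divide is_subfieldD)
  moreover have "poly l y0 = (poly m y0 - s) / r" using rel[of y0] rs(3) by (simp add: field_simps)
  hence "poly l y0 \<in> A" using m(3) rs A by (simp add: is_subfield_divide is_subfield_diff)
  ultimately show ?thesis by blast
qed

lemma infinite_two_points:
  assumes "infinite S" obtains z1 z2 where "z1 \<in> S" "z2 \<in> S" "z1 \<noteq> z2"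
proof -
  obtain z1 where "z1 \<in> S" using assms infinite_imp_nonempty by blast
  moreover obtain z2 where "z2 \<in> S - {z1}" using assms infinite_imp_nonempty[of "S - {z1}"] by auto
  ultimately show ?thesis using that by blast
qed

theorem mainTheorem14:
  fixes K E :: "'a :: {alg_closed_field, field_char_0} set"
    and f g :: "'a poly" and x0 y0 :: 'a
  assumes "is_subfield K" and "\<forall>x. algebraic_over K x"
    and "is_subfield E" and "E \<subseteq> K"
    and "poly_over K f" and "poly_over K g"
    and "degree f > 1" and "degree g > 1"
    and "x0 \<in> K" and "y0 \<in> K"
    and "isotrivial E f x0" and "isotrivial E g y0"
    and "infinite (orbit f x0 \<inter> orbit g y0)"
  shows "\<exists>\<mu>. degree \<mu> = 1 \<and>
           poly_over (alg_closure_in E) (conj_lin \<mu> f) \<and>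
           poly_over (alg_closure_in E) (conj_lin \<mu> g) \<and>
           poly \<mu> x0 \<in> alg_closure_in E \<and> poly \<mu> y0 \<in> alg_closure_in E"
proof -
  have A: "is_subfield (alg_closure_in E)" using alg_closure_in_is_subfield[OF assms(3)] .
  obtain l where l: "degree l = 1" "poly_over (alg_closure_in E) (conj_lin l f)"
      "poly l x0 \<in> alg_closure_in E"
    using assms(11) unfolding isotrivial_def by blast
  obtain m where m: "degree m = 1" "poly_over (alg_closure_in E) (conj_lin m g)"
      "poly m y0 \<in> alg_closure_in E"
    using assms(12) unfolding isotrivial_def by blast
  obtain z1 z2 where "z1 \<in> orbit f x0 \<inter> orbit g y0" "z2 \<in> orbit f x0 \<inter> orbit g y0" "z1 \<noteq> z2"
    using infinite_two_points[OF assms(13)] by blast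
  with common_conjugator[OF A l m] show ?thesis using l by blast
qed

end
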